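(* Let $x\in\mathbb{R}\setminus D$ with binary expansion $x=k+\sum_{n\ge1}a_n2^{-n}$ ($k\in\mathbb{Z}$, $a_n\in\{0,1\}$). Suppose $\liminf_n G_n'(x)$ and $\limsup_n G_n'(x)$ are finite and $$\limsup_n G_n'(x)-\liminf_n G_n'(x)\in\{1,2\}.$$ Then there exists $m\ge1$ such that $a_{m+2i}+a_{m+2i+1}=1$ for all $i\ge0$, and $$d_-T(x)=\liminf_n G_n'(x)+1,\qquad D^+T(x)=\limsup_n G_n'(x)-1.$$
   Context: Let $\phi(x)=\operatorname{dist}(x,\mathbb{Z})$ and $T(x)=\sum_{n=0}^\infty 2^{-n}\phi(2^nx)$ (the Takagi function). For $n\ge1$ let $D_n=\{k/2^{n-1}:k\in\mathbb{Z}\}$, $D=\bigcup_nD_n$, $g_n(x)=\operatorname{dist}(x,D_n)$, $G_n=g_1+\dots+g_n$; for $x\notin D$, $G_n'(x)$ exists and is an integer. Dini derivatives: $d_-f(x)=\liminf_{h\uparrow0}\frac{f(x+h)-f(x)}{h}$, $D^+f(x)=\limsup_{h\downarrow0}\frac{f(x+h)-f(x)}{h}$. *)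

theory Defs
  imports "HOL-Analysis.Analysis"
begin

definition phi :: "real \<Rightarrow> real" where
  "phi x = infdist x \<int>"

definition takagi :: "real \<Rightarrow> real" where
  "takagi x = (\<Sum>n. phi (2 ^ n * x) / 2 ^ n)"

definition Dset :: "nat \<Rightarrow> real set" where
  "Dset n = {of_int k / 2 ^ (n - 1) | k. True}"

definition Dall :: "real set" where
  "Dall = (\<Union>n\<in>{1..}. Dset n)"

definition gfun :: "nat \<Rightarrow> real \<Rightarrow> real" where
  "gfun n x = infdist x (Dset n)"

definition Gfun :: "nat \<Rightarrow> real \<Rightarrow> real" where
  "Gfun n x = (\<Sum>i=1..n. gfun i x)"

definition dini_lower_left :: "(real \<Rightarrow> real) \<Rightarrow> real \<Rightarrow> ereal" where
  "dini_lower_left f x = Liminf (at_left 0) (\<lambda>h. ereal ((f (x + h) - f x) / h))"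

definition dini_upper_right :: "(real \<Rightarrow> real) \<Rightarrow> real \<Rightarrow> ereal" where
  "dini_upper_right f x = Limsup (at_right 0) (\<lambda>h. ereal ((f (x + h) - f x) / h))"

end

theory Submission
  imports Defs
begin

text \<open>On the level-\<open>n\<close> dyadic interval containing \<open>x\<close> one has
  \<open>T y - T x = G\<^sub>n'(x) (y - x) + (T (2\<^sup>n y) - T (2\<^sup>n x)) / 2\<^sup>n\<close>, and \<open>n \<mapsto> G\<^sub>n'(x)\<close> is a
  walk with steps \<open>\<plusminus>1\<close>. If its upper and lower limits \<open>U\<close> and \<open>L\<close> differ by 1 or 2, the walk
  eventually stays in \<open>[L, U]\<close> and returns to the middle value \<open>U - 1\<close> every second step once it
  is there. The corresponding binary digits of \<open>x\<close> then come in pairs \<open>01\<close> or \<open>10\<close>, which is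
  exactly when \<open>T (2\<^sup>m x)\<close> attains the maximum \<open>2/3\<close> of \<open>T\<close>. Splitting at the last level whose
  dyadic interval still contains \<open>x + h\<close>, this yields \<open>T (x + h) - T x \<le> (U - 1) h\<close> for small
  \<open>h > 0\<close>, with equality for suitable \<open>h\<close> at each level where the walk reaches \<open>U\<close>; so
  \<open>D\<^sup>+T(x) = U - 1\<close>. The left derivative follows since \<open>T\<close> is even.\<close>

section \<open>Limits and integer walks\<close>

lemma Limsup_eqI_frequently:
  fixes X :: "_ \<Rightarrow> _ :: complete_linorder"
  assumes "\<forall>\<^sub>F x in F. X x \<le> c" and "\<exists>\<^sub>F x in F. X x = c"
  shows "Limsup F X = c"
proof (rule antisym)
  show "Limsup F X \<le> c" using assms(1) by (rule Limsup_bounded)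
  show "c \<le> Limsup F X"
  proof (rule ccontr)
    assume "\<not> c \<le> Limsup F X"
    then have "\<forall>\<^sub>F x in F. X x < c"
      using Limsup_le_iff[where C = "Limsup F X" and F = F and X = X] by (auto simp: not_le)
    from frequently_eventually_frequently[OF assms(2) this] have "\<exists>\<^sub>F x in F. False"
      by (rule frequently_elim1) auto
    then show False by simp
  qed
qed

lemma dini_lower_left_eq_uminus_dini_upper_right:
  "dini_lower_left f x = - dini_upper_right (\<lambda>y. f (- y)) (- x)"
proof -
  have "dini_lower_left f x = Liminf (filtermap uminus (at_right 0)) (\<lambda>h. ereal ((f (x + h) - f x) / h))"
    unfolding dini_lower_left_def at_left_minus[of 0] by simp
  also have "\<dots> = Liminf (at_right 0) (\<lambda>h. ereal ((f (x + - h) - f x) / - h))"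
    by (rule Liminf_filtermap_eq) (simp add: inj_on_def)
  also have "\<dots> = Liminf (at_right 0) (\<lambda>h. - ereal ((f (- (- x + h)) - f (- (- x))) / h))"
    by (simp add: field_simps)
  finally show ?thesis unfolding dini_upper_right_def ereal_Liminf_uminus .
qed

lemma limsup_int_attained:
  fixes w :: "nat \<Rightarrow> int"
  assumes "\<bar>limsup (\<lambda>n. ereal (of_int (w n)))\<bar> \<noteq> \<infinity>"
  obtains U where "limsup (\<lambda>n. ereal (of_int (w n))) = ereal (of_int U)"
    "\<forall>\<^sub>F n in sequentially. w n \<le> U" "\<exists>\<^sub>F n in sequentially. w n = U"
proof -
  obtain r where r: "limsup (\<lambda>n. ereal (of_int (w n))) = ereal r"
    using assms by (cases "limsup (\<lambda>n. ereal (of_int (w n)))") auto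
  have ev: "\<forall>\<^sub>F n in sequentially. of_int (w n) < r + 1/2"
    using Limsup_le_iff[where C = "ereal r" and F = sequentially and X = "\<lambda>n. ereal (of_int (w n))"] r
    by (auto elim: allE[of _ "ereal (r + 1/2)"])
  have above: "\<exists>\<^sub>F n in sequentially. r - 1/2 < of_int (w n)"
  proof (rule ccontr)
    assume "\<not> ?thesis"
    then have "\<forall>\<^sub>F n in sequentially. ereal (of_int (w n)) \<le> ereal (r - 1/2)"
      by (simp add: not_frequently not_less)
    then have "ereal r \<le> ereal (r - 1/2)" unfolding r[symmetric] by (rule Limsup_bounded)
    then show False by simp
  qed
  from frequently_eventually_frequently[OF above ev] obtain n0
    where n0: "r - 1/2 < of_int (w n0)" "of_int (w n0) < r + 1/2"
    by (auto dest: frequently_ex)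
  have ev': "\<forall>\<^sub>F n in sequentially. w n \<le> w n0"
    using ev by eventually_elim (use n0 in linarith)
  have fr: "\<exists>\<^sub>F n in sequentially. w n = w n0"
    using frequently_eventually_frequently[OF above ev']
    by (rule frequently_elim1) (use n0 in linarith)
  have "limsup (\<lambda>n. ereal (of_int (w n))) = ereal (of_int (w n0))"
    using ev' fr by (intro Limsup_eqI_frequently) (auto elim: eventually_mono frequently_elim1)
  then show ?thesis using ev' fr by (rule that)
qed

lemma liminf_int_attained:
  fixes w :: "nat \<Rightarrow> int"
  assumes "\<bar>liminf (\<lambda>n. ereal (of_int (w n)))\<bar> \<noteq> \<infinity>"
  obtains L where "liminf (\<lambda>n. ereal (of_int (w n))) = ereal (of_int L)"
    "\<forall>\<^sub>F n in sequentially. L \<le> w n" "\<exists>\<^sub>F n in sequentially. w n = L"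
proof -
  have neg: "limsup (\<lambda>n. ereal (of_int (- w n))) = - liminf (\<lambda>n. ereal (of_int (w n)))"
    using ereal_Limsup_uminus[of sequentially "\<lambda>n. ereal (of_int (w n))"] by simp
  have "\<bar>limsup (\<lambda>n. ereal (of_int (- w n)))\<bar> \<noteq> \<infinity>" using assms unfolding neg by simp
  then obtain U where U: "limsup (\<lambda>n. ereal (of_int (- w n))) = ereal (of_int U)"
    "\<forall>\<^sub>F n in sequentially. - w n \<le> U" "\<exists>\<^sub>F n in sequentially. - w n = U"
    by (rule limsup_int_attained)
  show ?thesis
  proof (rule that[of "- U"])
    show "liminf (\<lambda>n. ereal (of_int (w n))) = ereal (of_int (- U))"
      using U(1)[unfolded neg] by (simp add: ereal_uminus_eq_reorder)
  qed (use U(2,3) in \<open>auto elim: eventually_mono frequently_elim1\<close>)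
qed

lemma int_seq_narrow_band:
  fixes w :: "nat \<Rightarrow> int"
  assumes "\<bar>liminf (\<lambda>n. ereal (of_int (w n)))\<bar> \<noteq> \<infinity>" "\<bar>limsup (\<lambda>n. ereal (of_int (w n)))\<bar> \<noteq> \<infinity>"
    and "limsup (\<lambda>n. ereal (of_int (w n))) - liminf (\<lambda>n. ereal (of_int (w n))) \<in> {1, 2}"
  obtains L U N where "liminf (\<lambda>n. ereal (of_int (w n))) = ereal (of_int L)"
    "limsup (\<lambda>n. ereal (of_int (w n))) = ereal (of_int U)" "U - L \<in> {1, 2}"
    "\<forall>n\<ge>N. L \<le> w n \<and> w n \<le> U"
    "\<exists>\<^sub>F n in sequentially. w n = L" "\<exists>\<^sub>F n in sequentially. w n = U"
proof -
  obtain L where L: "liminf (\<lambda>n. ereal (of_int (w n))) = ereal (of_int L)"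
    "\<forall>\<^sub>F n in sequentially. L \<le> w n" "\<exists>\<^sub>F n in sequentially. w n = L"
    using assms(1) by (rule liminf_int_attained)
  obtain U where U: "limsup (\<lambda>n. ereal (of_int (w n))) = ereal (of_int U)"
    "\<forall>\<^sub>F n in sequentially. w n \<le> U" "\<exists>\<^sub>F n in sequentially. w n = U"
    using assms(2) by (rule limsup_int_attained)
  obtain N where "\<forall>n\<ge>N. L \<le> w n \<and> w n \<le> U"
    using eventually_conj[OF L(2) U(2)] unfolding eventually_sequentially by blast
  moreover have "U - L \<in> {1, 2}"
    using assms(3) unfolding U(1) L(1) by (auto simp: one_ereal_def)
  ultimately show ?thesis using L(1,3) U(1,3) by (intro that)
qed

lemma walk_returns_in_narrow_band:
  fixes w :: "nat \<Rightarrow> int"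
  assumes step: "\<And>n. \<bar>w (Suc n) - w n\<bar> = 1"
    and band: "\<forall>n\<ge>N. L \<le> w n \<and> w n \<le> U" and gap: "U - L \<in> {1, 2}"
    and "N \<le> n" "w n = U - 1"
  shows "w (n + 2 * i) = U - 1"
proof (induction i)
  case (Suc i)
  have "L \<le> w (Suc (n + 2 * i))" "w (Suc (n + 2 * i)) \<le> U"
    "L \<le> w (Suc (Suc (n + 2 * i)))" "w (Suc (Suc (n + 2 * i))) \<le> U"
    using band \<open>N \<le> n\<close> by simp_all
  then show ?case
    using Suc.IH gap step[of "n + 2 * i"] step[of "Suc (n + 2 * i)"] by (simp add: abs_eq_iff) arith
qed (use assms in simp)

section \<open>The tent map and the Takagi function\<close>

lemma infdist_int_multiples:
  assumes c: "c > 0"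
  shows "infdist y {of_int k / c | k. True} = min (frac (c * y)) (1 - frac (c * y)) / c"
proof (rule antisym)
  let ?A = "{of_int k / c | k::int. True}"
  let ?t = "c * y"
  have mem: "of_int k / c \<in> ?A" for k :: int by blast
  have dist_eq: "dist y (of_int k / c) = \<bar>?t - of_int k\<bar> / c" for k :: int
  proof -
    have "y - of_int k / c = (?t - of_int k) / c" using c by (simp add: field_simps)
    then show ?thesis using c by (simp add: dist_real_def)
  qed
  have "infdist y ?A \<le> frac ?t / c"
    using infdist_le[OF mem[of "\<lfloor>?t\<rfloor>"], of y] dist_eq[of "\<lfloor>?t\<rfloor>"] by (simp add: frac_def)
  moreover have "\<bar>?t - of_int (\<lfloor>?t\<rfloor> + 1)\<bar> = 1 - frac ?t"
    using frac_lt_1[of ?t] by (simp add: frac_def)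
  then have "infdist y ?A \<le> (1 - frac ?t) / c"
    using infdist_le[OF mem[of "\<lfloor>?t\<rfloor> + 1"], of y] dist_eq[of "\<lfloor>?t\<rfloor> + 1"] by (simp add: frac_def algebra_simps)
  ultimately show "infdist y ?A \<le> min (frac ?t) (1 - frac ?t) / c"
    by (simp add: min_def)
  have "min (frac ?t) (1 - frac ?t) \<le> \<bar>?t - of_int k\<bar>" for k :: int
  proof (cases "k \<le> \<lfloor>?t\<rfloor>")
    case True
    then show ?thesis unfolding frac_def by linarith
  next
    case False
    then show ?thesis unfolding frac_def using real_of_int_floor_add_one_gt[of ?t] by linarith
  qed
  moreover have "?A \<noteq> {}" by blast
  ultimately show "min (frac ?t) (1 - frac ?t) / c \<le> infdist y ?A"
    unfolding infdist_def using c by (auto intro!: cINF_greatest simp: dist_eq divide_right_mono)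
qed

lemma phi_eq_min_frac: "phi t = min (frac t) (1 - frac t)"
proof -
  have "(\<int>::real set) = {of_int k / 1 | k. True}" by (auto simp: Ints_def image_def)
  then show ?thesis unfolding phi_def using infdist_int_multiples[of 1 t] by simp
qed

lemma gfun_eq_phi: "1 \<le> i \<Longrightarrow> gfun i y = phi (2 ^ (i - 1) * y) / 2 ^ (i - 1)"
  unfolding gfun_def Dset_def phi_eq_min_frac using infdist_int_multiples[of "2 ^ (i - 1)" y] by simp

lemma Gfun_eq_sum_phi: "Gfun n y = (\<Sum>i<n. phi (2 ^ i * y) / 2 ^ i)"
proof -
  have "Gfun n y = (\<Sum>i<n. gfun (Suc i) y)"
    unfolding Gfun_def using sum.atLeast1_atMost_eq[of "\<lambda>i. gfun i y" n] by simp
  then show ?thesis by (simp add: gfun_eq_phi)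
qed

lemma phi_nonneg: "0 \<le> phi t"
  unfolding phi_eq_min_frac using frac_lt_1[of t] by simp

lemma phi_le_half: "phi t \<le> 1 / 2"
  unfolding phi_eq_min_frac by linarith

lemma phi_add_of_int: "phi (t + of_int k) = phi t"
  unfolding phi_eq_min_frac by simp

lemma phi_minus: "phi (- t) = phi t"
proof (cases "t \<in> \<int>")
  case True
  then have "frac t = 0" "frac (- t) = 0" by simp_all
  then show ?thesis unfolding phi_eq_min_frac by (simp del: frac_eq_0_iff)
qed (simp add: phi_eq_min_frac frac_neg min_def)

lemma phi_on_half_interval:
  assumes "of_int k \<le> 2 * t" "2 * t \<le> of_int k + 1"
  shows "phi t = (if even k then t - of_int k / 2 else (of_int k + 1) / 2 - t)"
proof (cases "even k")
  case True
  then obtain p where k: "k = 2 * p" by blast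
  have "\<lfloor>t\<rfloor> = p" using assms unfolding k by (intro floor_unique) auto
  then show ?thesis using True assms unfolding phi_eq_min_frac frac_def k by auto
next
  case False
  then obtain p where k: "k = 2 * p + 1" by (meson oddE)
  have "\<lfloor>t\<rfloor> = (if t < of_int p + 1 then p else p + 1)"
    using assms unfolding k by (intro floor_unique) auto
  then show ?thesis using False assms unfolding phi_eq_min_frac frac_def k
    by (auto split: if_splits)
qed

lemma summable_takagi: "summable (\<lambda>n. phi (2 ^ n * y) / 2 ^ n)"
proof (rule summable_comparison_test)
  show "summable (\<lambda>n. (1/2::real) * (1/2) ^ n)"
    by (intro summable_mult summable_geometric) simp
  have "phi (2 ^ n * y) / 2 ^ n \<le> (1/2) / 2 ^ n" for n :: nat
    by (rule divide_right_mono[OF phi_le_half]) simp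
  then show "\<exists>N. \<forall>n\<ge>N. norm (phi (2 ^ n * y) / 2 ^ n) \<le> 1/2 * (1/2::real) ^ n"
    using phi_nonneg by (simp add: power_divide)
qed

lemma sums_takagi: "(\<lambda>n. phi (2 ^ n * y) / 2 ^ n) sums takagi y"
  unfolding takagi_def using summable_takagi by (rule summable_sums)

lemma takagi_split: "takagi y = (\<Sum>i<j. phi (2 ^ i * y) / 2 ^ i) + takagi (2 ^ j * y) / 2 ^ j"
proof -
  have "(\<lambda>n. phi (2 ^ (n + j) * y) / 2 ^ (n + j)) = (\<lambda>n. (phi (2 ^ n * (2 ^ j * y)) / 2 ^ n) / 2 ^ j)"
    by (simp add: power_add mult.assoc)
  then have "(\<Sum>n. phi (2 ^ (n + j) * y) / 2 ^ (n + j)) = takagi (2 ^ j * y) / 2 ^ j"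
    unfolding takagi_def by (simp only:) (rule suminf_divide[OF summable_takagi])
  then show ?thesis
    using suminf_split_initial_segment[OF summable_takagi, of y j] unfolding takagi_def by simp
qed

lemma takagi_double: "takagi y = phi y + takagi (2 * y) / 2"
  using takagi_split[of y 1] by simp

lemma takagi_add_of_int: "takagi (y + of_int k) = takagi y"
proof -
  have "phi (2 ^ n * (y + of_int k)) = phi (2 ^ n * y)" for n :: nat
    using phi_add_of_int[of "2 ^ n * y" "2 ^ n * k"] by (simp add: algebra_simps)
  then show ?thesis unfolding takagi_def by simp
qed

lemma takagi_minus: "takagi (- y) = takagi y"
  unfolding takagi_def using phi_minus[of "2 ^ _ * y"] by simp

section \<open>Slopes of the partial sums\<close>

text \<open>\<open>tent_slope i y\<close> is the slope at \<open>y\<close> of the linear piece of \<open>phi (2 ^ i * _) / 2 ^ i\<close>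
  just to the right of \<open>y\<close>, i.e. \<open>g\<^sub>i\<^sub>+\<^sub>1'(y)\<close>, and \<open>partial_slope n y\<close> is \<open>G\<^sub>n'(y)\<close> for \<open>y \<notin> D\<close>.\<close>

definition tent_slope :: "nat \<Rightarrow> real \<Rightarrow> int" where
  "tent_slope i y = (if even \<lfloor>2 ^ Suc i * y\<rfloor> then 1 else -1)"

definition partial_slope :: "nat \<Rightarrow> real \<Rightarrow> int" where
  "partial_slope n y = (\<Sum>i<n. tent_slope i y)"

lemma floor_double_cases: "\<lfloor>2 * t\<rfloor> = 2 * \<lfloor>t\<rfloor> \<or> \<lfloor>2 * t\<rfloor> = 2 * \<lfloor>t\<rfloor> + 1" for t :: real
proof -
  have "2 * \<lfloor>t\<rfloor> \<le> \<lfloor>2 * t\<rfloor>" by (subst le_floor_iff) simp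
  moreover have "\<lfloor>2 * t\<rfloor> \<le> 2 * \<lfloor>t\<rfloor> + 1"
    using real_of_int_floor_add_one_gt[of t] by (subst floor_le_iff) linarith
  ultimately show ?thesis by linarith
qed

lemma tent_slope_cases: "tent_slope i y = 1 \<or> tent_slope i y = -1"
  unfolding tent_slope_def by simp

lemma tent_slope_eq_one_iff: "tent_slope n x = 1 \<longleftrightarrow> \<lfloor>2 ^ Suc n * x\<rfloor> = 2 * \<lfloor>2 ^ n * x\<rfloor>"
  using floor_double_cases[of "2 ^ n * x"] unfolding tent_slope_def by (auto simp: mult.assoc)

lemma tent_slope_pow2_mult: "tent_slope j (2 ^ n * x) = tent_slope (n + j) x"
  unfolding tent_slope_def by (simp add: power_add mult_ac)

lemma partial_slope_Suc: "partial_slope (Suc n) x = partial_slope n x + tent_slope n x"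
  unfolding partial_slope_def by simp

lemma partial_slope_step: "\<bar>partial_slope (Suc n) x - partial_slope n x\<bar> = 1"
  using tent_slope_cases[of n x] by (auto simp: partial_slope_Suc)

lemma tent_slope_minus:
  assumes "2 ^ Suc i * x \<notin> \<int>"
  shows "tent_slope i (- x) = - tent_slope i x"
proof -
  have "\<lceil>2 ^ Suc i * x\<rceil> = \<lfloor>2 ^ Suc i * x\<rfloor> + 1"
    using assms by (metis Ints_of_int ceiling_altdef)
  then have "\<lfloor>2 ^ Suc i * (- x)\<rfloor> = - \<lfloor>2 ^ Suc i * x\<rfloor> - 1"
    using floor_minus[of "2 ^ Suc i * x"] by simp
  then show ?thesis unfolding tent_slope_def by simp
qed

lemma partial_slope_minus:
  assumes "\<forall>j. 2 ^ j * x \<notin> \<int>"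
  shows "partial_slope n (- x) = - partial_slope n x"
proof -
  have "tent_slope i (- x) = - tent_slope i x" for i using assms tent_slope_minus by blast
  then show ?thesis unfolding partial_slope_def by (simp add: sum_negf)
qed

lemma pow2_mult_notin_Ints_if_notin_Dall:
  assumes "x \<notin> Dall"
  shows "2 ^ j * x \<notin> \<int>"
proof
  assume "2 ^ j * x \<in> \<int>"
  then obtain k where "2 ^ j * x = of_int k" by (auto elim: Ints_cases)
  then have "x \<in> Dset (Suc j)" unfolding Dset_def by (auto simp: field_simps)
  then show False using assms unfolding Dall_def by auto
qed

lemma tent_has_real_derivative:
  assumes "2 ^ Suc i * x \<notin> \<int>"
  shows "((\<lambda>y. phi (2 ^ i * y) / 2 ^ i) has_real_derivative of_int (tent_slope i x)) (at x)"
proof -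
  define k where "k = \<lfloor>2 ^ Suc i * x\<rfloor>"
  define S where "S = {y::real. of_int k < 2 ^ Suc i * y \<and> 2 ^ Suc i * y < of_int k + 1}"
  define g where "g y = (if even k then y - of_int k / 2 ^ Suc i else (of_int k + 1) / 2 ^ Suc i - y)"
    for y :: real
  have "of_int k \<noteq> 2 ^ Suc i * x" using assms by (metis Ints_of_int)
  moreover have "of_int k \<le> 2 ^ Suc i * x" "2 ^ Suc i * x < of_int k + 1" unfolding k_def by linarith+
  ultimately have xS: "x \<in> S" unfolding S_def by auto
  have oS: "open S" unfolding S_def by (intro open_Collect_conj open_Collect_less continuous_intros)
  have eq: "g y = phi (2 ^ i * y) / 2 ^ i" if "y \<in> S" for y
  proof -
    have "of_int k \<le> 2 * (2 ^ i * y)" "2 * (2 ^ i * y) \<le> of_int k + 1" using that unfolding S_def by auto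
    from phi_on_half_interval[OF this] show ?thesis unfolding g_def by (simp add: field_simps)
  qed
  have "(g has_real_derivative of_int (tent_slope i x)) (at x)"
    unfolding g_def tent_slope_def k_def[symmetric]
    by (cases "even k") (auto intro!: derivative_eq_intros)
  from this oS xS eq show ?thesis by (rule has_field_derivative_transform_within_open)
qed

lemma deriv_Gfun_eq_partial_slope:
  assumes "\<forall>j. 2 ^ j * x \<notin> \<int>"
  shows "deriv (Gfun n) x = of_int (partial_slope n x)"
proof -
  have "((\<lambda>y. \<Sum>i<n. phi (2 ^ i * y) / 2 ^ i) has_real_derivative (\<Sum>i<n. of_int (tent_slope i x))) (at x)"
    using assms by (intro DERIV_sum tent_has_real_derivative) blast
  then show ?thesis unfolding Gfun_eq_sum_phi partial_slope_def by (simp add: DERIV_imp_deriv)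
qed

lemma tent_slope_pairs_cancel:
  assumes "\<forall>i. partial_slope (m + 2 * i) x = partial_slope m x"
  shows "tent_slope (m + 2 * i) x + tent_slope (m + 2 * i + 1) x = 0"
proof -
  have "partial_slope (Suc (Suc (m + 2 * i))) x = partial_slope (m + 2 * i) x"
    using assms[rule_format, of "Suc i"] assms[rule_format, of i] by simp
  then show ?thesis by (simp add: partial_slope_Suc)
qed

lemma phi_pair_le_half: "phi w + phi (2 * w) / 2 \<le> 1 / 2"
  and phi_pair_eq_half: "tent_slope 0 w + tent_slope 1 w = 0 \<Longrightarrow> phi w + phi (2 * w) / 2 = 1 / 2"
proof -
  define k where "k = \<lfloor>2 * w\<rfloor>"
  define l where "l = \<lfloor>2 * (2 * w)\<rfloor>"
  have k: "of_int k \<le> 2 * w" "2 * w \<le> of_int k + 1" unfolding k_def by linarith+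
  have l: "of_int l \<le> 2 * (2 * w)" "2 * (2 * w) \<le> of_int l + 1" unfolding l_def by linarith+
  have "l = 2 * k \<or> l = 2 * k + 1" unfolding k_def l_def by (rule floor_double_cases)
  then have "phi w + phi (2 * w) / 2 \<le> 1 / 2 \<and> (even k \<noteq> even l \<longrightarrow> phi w + phi (2 * w) / 2 = 1 / 2)"
    using phi_on_half_interval[OF k] phi_on_half_interval[OF l] k l by (auto simp: field_simps)
  moreover have "tent_slope 0 w = (if even k then 1 else -1)" "tent_slope 1 w = (if even l then 1 else -1)"
    unfolding tent_slope_def k_def l_def by (simp_all add: mult.assoc)
  ultimately show "phi w + phi (2 * w) / 2 \<le> 1 / 2"
    and "tent_slope 0 w + tent_slope 1 w = 0 \<Longrightarrow> phi w + phi (2 * w) / 2 = 1 / 2"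
    by (auto split: if_splits)
qed

lemma sums_takagi_pairs:
  "(\<lambda>n. (phi (2 ^ (2 * n) * z) + phi (2 * (2 ^ (2 * n) * z)) / 2) * (1/4) ^ n) sums takagi z"
proof -
  have "(\<lambda>n. sum (\<lambda>i. phi (2 ^ i * z) / 2 ^ i) {n * 2 ..< n * 2 + 2}) sums takagi z"
    using sums_group[OF sums_takagi, of 2] by simp
  moreover have "sum (\<lambda>i. phi (2 ^ i * z) / 2 ^ i) {n * 2 ..< n * 2 + 2}
      = (phi (2 ^ (2 * n) * z) + phi (2 * (2 ^ (2 * n) * z)) / 2) * (1/4) ^ n" for n
  proof -
    have "{n * 2 ..< n * 2 + 2} = {2 * n, 2 * n + 1}" by auto
    moreover have "(2::real) ^ (2 * n) = 4 ^ n" by (simp add: power_mult)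
    moreover have "(2::real) ^ (2 * n + 1) * z = 2 * (2 ^ (2 * n) * z)" by simp
    ultimately show ?thesis by (simp add: field_simps)
  qed
  ultimately show ?thesis by simp
qed

lemma sums_two_thirds: "(\<lambda>n. 1/2 * (1/4) ^ n) sums (2/3 :: real)"
  using sums_mult[OF geometric_sums[of "1/4 :: real"], of "1/2"] by simp

lemma takagi_le_two_thirds: "takagi z \<le> 2/3"
  by (rule sums_le[OF _ sums_takagi_pairs sums_two_thirds])
    (intro mult_right_mono phi_pair_le_half, simp)

lemma takagi_pow2_mult_eq_two_thirds:
  assumes "\<forall>i. partial_slope (m + 2 * i) x = partial_slope m x"
  shows "takagi (2 ^ m * x) = 2/3"
proof -
  have "phi (2 ^ (2 * n) * (2 ^ m * x)) + phi (2 * (2 ^ (2 * n) * (2 ^ m * x))) / 2 = 1/2" for n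
    using phi_pair_eq_half tent_slope_pairs_cancel[OF assms, of n]
    by (simp add: tent_slope_pow2_mult add.commute)
  then have "(\<lambda>n. 1/2 * (1/4) ^ n) sums takagi (2 ^ m * x)"
    using sums_takagi_pairs[of "2 ^ m * x"] by (simp only:)
  then show ?thesis using sums_two_thirds sums_unique2 by blast
qed

lemma takagi_le_add_third: "0 \<le> t \<Longrightarrow> t \<le> 1 \<Longrightarrow> takagi t \<le> t + 1/3"
  using takagi_double[of t] phi_on_half_interval[of 0 t] takagi_le_two_thirds[of t]
    takagi_le_two_thirds[of "2 * t"]
  by (cases "t \<le> 1/2") auto

lemma takagi_one_third: "takagi (1/3) = 2/3"
proof -
  have "takagi (1/3) = 1/3 + takagi (2/3) / 2"
    using takagi_double[of "1/3"] phi_on_half_interval[of 0 "1/3"] by simp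
  moreover have "takagi (2/3) = 1/3 + takagi (1/3) / 2"
    using takagi_double[of "2/3"] phi_on_half_interval[of 1 "2/3"] takagi_add_of_int[of "1/3" 1]
    by simp
  ultimately show ?thesis by linarith
qed

section \<open>Increments on dyadic intervals\<close>

definition dyadic_interval :: "nat \<Rightarrow> real \<Rightarrow> real set" where
  "dyadic_interval n x = {of_int \<lfloor>2 ^ n * x\<rfloor> / 2 ^ n .. (of_int \<lfloor>2 ^ n * x\<rfloor> + 1) / 2 ^ n}"

lemma mem_dyadic_interval_iff:
  "y \<in> dyadic_interval n x \<longleftrightarrow> of_int \<lfloor>2 ^ n * x\<rfloor> \<le> 2 ^ n * y \<and> 2 ^ n * y \<le> of_int \<lfloor>2 ^ n * x\<rfloor> + 1"
  unfolding dyadic_interval_def by (simp add: field_simps)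

lemma self_in_dyadic_interval: "x \<in> dyadic_interval n x"
  unfolding mem_dyadic_interval_iff by linarith

lemma dyadic_interval_Suc_subset: "dyadic_interval (Suc n) x \<subseteq> dyadic_interval n x"
proof
  fix y assume "y \<in> dyadic_interval (Suc n) x"
  then show "y \<in> dyadic_interval n x"
    using floor_double_cases[of "2 ^ n * x"] unfolding mem_dyadic_interval_iff
    by (auto simp: mult.assoc)
qed

lemma dyadic_interval_antimono: "j \<le> n \<Longrightarrow> dyadic_interval n x \<subseteq> dyadic_interval j x"
  using lift_Suc_antimono_le[of "\<lambda>n. dyadic_interval n x"] dyadic_interval_Suc_subset by blast

lemma tent_slope_eq_one_if_right_of_subinterval:
  assumes "x < y" "y \<in> dyadic_interval n x - dyadic_interval (Suc n) x"
  shows "tent_slope n x = 1"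
proof (rule ccontr)
  assume "tent_slope n x \<noteq> 1"
  then have q: "\<lfloor>2 ^ Suc n * x\<rfloor> = 2 * \<lfloor>2 ^ n * x\<rfloor> + 1"
    using tent_slope_eq_one_iff floor_double_cases[of "2 ^ n * x"] by (auto simp: mult.assoc)
  have "(2::real) ^ Suc n * x < 2 ^ Suc n * y" using assms(1) by simp
  then have "of_int \<lfloor>2 ^ Suc n * x\<rfloor> \<le> 2 ^ Suc n * y"
    using of_int_floor_le[of "2 ^ Suc n * x"] by linarith
  with q show False using assms(2) by (auto simp: mem_dyadic_interval_iff)
qed

lemma tent_diff_on_dyadic_interval:
  assumes "i < n" "y \<in> dyadic_interval n x"
  shows "phi (2 ^ i * y) / 2 ^ i - phi (2 ^ i * x) / 2 ^ i = of_int (tent_slope i x) * (y - x)"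
proof -
  define k where "k = \<lfloor>2 ^ Suc i * x\<rfloor>"
  have "y \<in> dyadic_interval (Suc i) x" "x \<in> dyadic_interval (Suc i) x"
    using assms dyadic_interval_antimono[of "Suc i" n x] self_in_dyadic_interval by auto
  then have "of_int k \<le> 2 * (2 ^ i * y)" "2 * (2 ^ i * y) \<le> of_int k + 1"
    and "of_int k \<le> 2 * (2 ^ i * x)" "2 * (2 ^ i * x) \<le> of_int k + 1"
    unfolding mem_dyadic_interval_iff k_def by (simp_all add: mult.assoc)
  from phi_on_half_interval[OF this(1,2)] phi_on_half_interval[OF this(3,4)] show ?thesis
    unfolding tent_slope_def k_def[symmetric] by (simp add: field_simps)
qed

lemma takagi_diff_on_dyadic_interval:
  assumes "y \<in> dyadic_interval n x"
  shows "takagi y - takagi x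
    = of_int (partial_slope n x) * (y - x) + (takagi (2 ^ n * y) - takagi (2 ^ n * x)) / 2 ^ n"
proof -
  have "(\<Sum>i<n. phi (2 ^ i * y) / 2 ^ i) - (\<Sum>i<n. phi (2 ^ i * x) / 2 ^ i)
      = of_int (partial_slope n x) * (y - x)"
    using tent_diff_on_dyadic_interval[OF _ assms]
    by (simp add: partial_slope_def sum_subtractf[symmetric] sum_distrib_right)
  then show ?thesis
    using takagi_split[of y n] takagi_split[of x n] by (simp add: diff_divide_distrib)
qed

lemma right_half_of_dyadic_interval:
  assumes "tent_slope n x = 1" "y \<in> dyadic_interval n x - dyadic_interval (Suc n) x"
  shows "2 * of_int \<lfloor>2 ^ n * x\<rfloor> + 1 < 2 ^ Suc n * y" "2 ^ Suc n * y \<le> 2 * of_int \<lfloor>2 ^ n * x\<rfloor> + 2"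
  using assms tent_slope_eq_one_iff[of n x] by (auto simp: mem_dyadic_interval_iff)

text \<open>At level \<open>n\<close> the tents of index \<open>< n\<close> are linear on \<open>dyadic_interval n x\<close>; the \<open>n\<close>-th one
  rises on the half containing \<open>x\<close> and falls on the half containing \<open>y\<close>.\<close>

lemma takagi_diff_across_midpoint:
  fixes x y :: real and n :: nat
  defines "p \<equiv> \<lfloor>2 ^ n * x\<rfloor>"
  assumes left: "tent_slope n x = 1"
    and y: "y \<in> dyadic_interval n x - dyadic_interval (Suc n) x"
  shows "2 ^ Suc n * (takagi y - takagi x)
    = (of_int (partial_slope n x) + 1) * (1 - (2 ^ Suc n * x - 2 * of_int p))
      + (of_int (partial_slope n x) - 1) * (2 ^ Suc n * y - 2 * of_int p - 1)
      + takagi (2 ^ Suc n * y - 2 * of_int p - 1) - takagi (2 ^ Suc n * x)"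
proof -
  define X where "X = 2 ^ n * x"
  define Y where "Y = 2 ^ n * y"
  define w where "w = real_of_int (partial_slope n x)"
  define B where "B = 2 * Y - 2 * of_int p - 1"
  have q: "\<lfloor>2 * X\<rfloor> = 2 * p"
    using left tent_slope_eq_one_iff unfolding p_def X_def by (simp add: mult.assoc)
  then have x_left: "of_int p \<le> X" "2 * X < 2 * of_int p + 1"
    by linarith+
  have y_right: "2 * of_int p + 1 < 2 * Y" "Y \<le> of_int p + 1"
    using right_half_of_dyadic_interval[OF left y] unfolding p_def Y_def by simp_all
  have TX: "takagi X = (X - of_int p) + takagi (2 * X) / 2"
    using takagi_double[of "X - of_int p"] phi_on_half_interval[of 0 "X - of_int p"] x_left
      takagi_add_of_int[of "X - of_int p" p] takagi_add_of_int[of "2 * X - 2 * of_int p" "2 * p"]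
    by (simp add: algebra_simps)
  have TY: "takagi Y = (1 - (Y - of_int p)) + takagi B / 2"
    using takagi_double[of "Y - of_int p"] phi_on_half_interval[of 1 "Y - of_int p"] y_right
      takagi_add_of_int[of "Y - of_int p" p] takagi_add_of_int[of B 1]
    unfolding B_def by (simp add: algebra_simps)
  have "takagi y - takagi x = w * (y - x) + (takagi Y - takagi X) / 2 ^ n"
    using takagi_diff_on_dyadic_interval y unfolding w_def X_def Y_def by blast
  then have "2 ^ Suc n * (takagi y - takagi x) = 2 * (w * (Y - X)) + 2 * (takagi Y - takagi X)"
    unfolding X_def Y_def by (simp add: field_simps)
  also have "\<dots> = (w + 1) * (1 - (2 * X - 2 * of_int p)) + (w - 1) * B + takagi B - takagi (2 * X)"
    unfolding TX TY B_def by (simp add: algebra_simps)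
  finally show ?thesis unfolding X_def Y_def B_def w_def by (simp add: mult.assoc)
qed

lemma takagi_pow2_mult_before_return:
  fixes x :: real and n :: nat
  defines "p \<equiv> \<lfloor>2 ^ n * x\<rfloor>"
  assumes "tent_slope n x = 1" "tent_slope (Suc n) x = -1"
    and "\<forall>i. partial_slope (Suc (Suc n) + 2 * i) x = partial_slope (Suc (Suc n)) x"
  shows "takagi (2 ^ Suc n * x) = 1 - (2 ^ Suc n * x - 2 * of_int p) + 1/3"
proof -
  define z where "z = 2 ^ Suc n * x"
  have "takagi (2 * z) = 2/3"
    using takagi_pow2_mult_eq_two_thirds[OF assms(4)] unfolding z_def by (simp add: mult.assoc)
  moreover have "\<lfloor>2 * z\<rfloor> = 4 * p + 1"
    using assms(2,3) tent_slope_eq_one_iff[of n x] tent_slope_eq_one_iff[of "Suc n" x]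
      floor_double_cases[of z] tent_slope_cases[of "Suc n" x]
    unfolding z_def p_def by (auto simp: mult.assoc)
  then have "of_int (4 * p + 1) \<le> 2 * z" "2 * z \<le> of_int (4 * p + 1) + 1"
    by linarith+
  then have "phi z = 1 - (z - 2 * of_int p)"
    by (subst phi_on_half_interval[of "4 * p + 1"]) simp_all
  ultimately show ?thesis using takagi_double[of z] unfolding z_def by simp
qed

lemma dyadic_exit_level:
  assumes "0 < h" "x + h \<in> dyadic_interval N x"
  obtains n where "N \<le> n" "x + h \<in> dyadic_interval n x - dyadic_interval (Suc n) x"
proof -
  obtain J where "(1/2) ^ J < h" using real_arch_pow_inv[OF assms(1), of "1/2"] by auto
  then have "1 < 2 ^ J * h" by (simp add: field_simps)
  moreover have "of_int \<lfloor>2 ^ J * x\<rfloor> \<le> 2 ^ J * x" by (rule of_int_floor_le)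
  ultimately have "\<not> 2 ^ J * (x + h) \<le> of_int \<lfloor>2 ^ J * x\<rfloor> + 1"
    unfolding distrib_left by linarith
  then have "x + h \<notin> dyadic_interval J x" by (simp add: mem_dyadic_interval_iff)
  then obtain m where m: "x + h \<notin> dyadic_interval m x" "\<forall>j<m. x + h \<in> dyadic_interval j x"
    using exists_least_iff[of "\<lambda>m. x + h \<notin> dyadic_interval m x"] by blast
  have "N < m" using m(1) assms(2) dyadic_interval_antimono[of m N x] by (meson leI subsetD)
  then obtain n where "m = Suc n" "N \<le> n" by (cases m) auto
  with m show ?thesis by (intro that) auto
qed

section \<open>The Dini derivatives\<close>

lemma takagi_increment_le_across_midpoint:
  assumes band: "\<forall>n\<ge>N. U - 2 \<le> partial_slope n x \<and> partial_slope n x \<le> U"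
    and returns: "\<forall>n\<ge>N. partial_slope n x = U - 1 \<longrightarrow> (\<forall>i. partial_slope (n + 2 * i) x = U - 1)"
    and "N \<le> n" "x < y" and y: "y \<in> dyadic_interval n x - dyadic_interval (Suc n) x"
  shows "takagi y - takagi x \<le> of_int (U - 1) * (y - x)"
proof -
  have left: "tent_slope n x = 1" by (rule tent_slope_eq_one_if_right_of_subinterval[OF \<open>x < y\<close> y])
  define p where "p = \<lfloor>2 ^ n * x\<rfloor>"
  define A where "A = 1 - (2 ^ Suc n * x - 2 * of_int p)"
  define B where "B = 2 ^ Suc n * y - 2 * of_int p - 1"
  have dec: "2 ^ Suc n * (takagi y - takagi x) = (of_int (partial_slope n x) + 1) * A
      + (of_int (partial_slope n x) - 1) * B + takagi B - takagi (2 ^ Suc n * x)"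
    using takagi_diff_across_midpoint[OF left y] unfolding A_def B_def p_def .
  have B: "0 \<le> B" "B \<le> 1"
    using right_half_of_dyadic_interval[OF left y] unfolding B_def p_def by simp_all
  have up: "partial_slope (Suc n) x = partial_slope n x + 1"
    using left by (simp add: partial_slope_Suc)
  have "2 ^ Suc n * (takagi y - takagi x) \<le> of_int (U - 1) * (A + B)"
  proof (cases "partial_slope n x = U - 1")
    case True
    moreover have "partial_slope (Suc (Suc n)) x \<le> U" using band \<open>N \<le> n\<close> by simp
    ultimately have down: "tent_slope (Suc n) x = -1"
      using up tent_slope_cases[of "Suc n" x] by (auto simp: partial_slope_Suc)
    then have "partial_slope (Suc (Suc n)) x = U - 1"
      using True up by (simp add: partial_slope_Suc)
    then have "\<forall>i. partial_slope (Suc (Suc n) + 2 * i) x = partial_slope (Suc (Suc n)) x"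
      using returns[rule_format, of "Suc (Suc n)"] \<open>N \<le> n\<close> by simp
    then have "takagi (2 ^ Suc n * x) = A + 1/3"
      using takagi_pow2_mult_before_return[OF left down] unfolding A_def p_def by simp
    moreover have "takagi B \<le> B + 1/3" using takagi_le_add_third B by simp
    ultimately show ?thesis using dec True by (simp add: algebra_simps)
  next
    case False
    then have "partial_slope n x = U - 2"
      using band[rule_format, of n] band[rule_format, of "Suc n"] \<open>N \<le> n\<close> up by simp
    then have "\<forall>i. partial_slope (Suc n + 2 * i) x = partial_slope (Suc n) x"
      using returns[rule_format, of "Suc n"] \<open>N \<le> n\<close> up by simp
    then have "takagi (2 ^ Suc n * x) = 2/3" by (rule takagi_pow2_mult_eq_two_thirds)
    moreover have "takagi B \<le> 2/3" by (rule takagi_le_two_thirds)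
    ultimately show ?thesis using dec \<open>partial_slope n x = U - 2\<close> B by (simp add: algebra_simps)
  qed
  moreover have "A + B = 2 ^ Suc n * (y - x)" unfolding A_def B_def by (simp add: algebra_simps)
  ultimately show ?thesis by simp
qed

lemma takagi_right_increment_le:
  assumes band: "\<forall>n\<ge>N. U - 2 \<le> partial_slope n x \<and> partial_slope n x \<le> U"
    and returns: "\<forall>n\<ge>N. partial_slope n x = U - 1 \<longrightarrow> (\<forall>i. partial_slope (n + 2 * i) x = U - 1)"
  shows "\<forall>\<^sub>F h in at_right 0. takagi (x + h) - takagi x \<le> of_int (U - 1) * h"
  unfolding eventually_at_right_field
proof (intro exI[of _ "(of_int \<lfloor>2 ^ N * x\<rfloor> + 1) / 2 ^ N - x"] conjI allI impI)
  show "0 < (of_int \<lfloor>2 ^ N * x\<rfloor> + 1) / 2 ^ N - x"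
    using real_of_int_floor_add_one_gt[of "2 ^ N * x"] by (simp add: field_simps)
  fix h :: real assume h: "0 < h" "h < (of_int \<lfloor>2 ^ N * x\<rfloor> + 1) / 2 ^ N - x"
  then have "x + h \<in> dyadic_interval N x"
    using self_in_dyadic_interval[of x N] unfolding dyadic_interval_def by auto
  with h(1) obtain n where "N \<le> n" "x + h \<in> dyadic_interval n x - dyadic_interval (Suc n) x"
    by (rule dyadic_exit_level)
  from takagi_increment_le_across_midpoint[OF band returns this(1) _ this(2)] h(1)
  show "takagi (x + h) - takagi x \<le> of_int (U - 1) * h" by simp
qed

lemma takagi_increment_attains_slope:
  assumes band: "\<forall>n\<ge>N. U - 2 \<le> partial_slope n x \<and> partial_slope n x \<le> U"
    and returns: "\<forall>n\<ge>N. partial_slope n x = U - 1 \<longrightarrow> (\<forall>i. partial_slope (n + 2 * i) x = U - 1)"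
    and "N \<le> n" "partial_slope (Suc n) x = U"
  obtains h where "0 < h" "h < 1 / 2 ^ n" "takagi (x + h) - takagi x = of_int (U - 1) * h"
proof -
  have "partial_slope n x \<le> U" using band \<open>N \<le> n\<close> by simp
  then have left: "tent_slope n x = 1"
    using assms(4) tent_slope_cases[of n x] by (auto simp: partial_slope_Suc)
  have "partial_slope (Suc (Suc n)) x \<le> U" using band \<open>N \<le> n\<close> by simp
  then have down: "tent_slope (Suc n) x = -1"
    using assms(4) tent_slope_cases[of "Suc n" x] by (auto simp: partial_slope_Suc)
  then have "partial_slope (Suc (Suc n)) x = U - 1" using assms(4) by (simp add: partial_slope_Suc)
  then have "\<forall>i. partial_slope (Suc (Suc n) + 2 * i) x = partial_slope (Suc (Suc n)) x"
    using returns[rule_format, of "Suc (Suc n)"] \<open>N \<le> n\<close> by simp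
  note T = takagi_pow2_mult_before_return[OF left down this]
  have slope: "real_of_int (partial_slope n x) = of_int U - 1"
    using assms(4) left by (simp add: partial_slope_Suc)
  define p where "p = \<lfloor>2 ^ n * x\<rfloor>"
  define A where "A = 1 - (2 ^ Suc n * x - 2 * of_int p)"
  have q: "\<lfloor>2 ^ Suc n * x\<rfloor> = 2 * p" using left tent_slope_eq_one_iff p_def by simp
  then have A: "0 < A" "A \<le> 1" unfolding A_def by linarith+
  text \<open>Choose \<open>h\<close> with \<open>2 ^ Suc n * (x + h) - 2 * p - 1 = 1/3\<close>, where the bound
    \<open>takagi t \<le> t + 1/3\<close> behind the upper estimate is attained.\<close>
  define h where "h = (A + 1/3) / 2 ^ Suc n"
  have hx: "2 ^ Suc n * (x + h) = 2 * of_int p + 4/3"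
    unfolding h_def A_def by (simp add: field_simps)
  then have "2 ^ n * (x + h) = of_int p + 2/3" by simp
  then have "x + h \<in> dyadic_interval n x"
    unfolding mem_dyadic_interval_iff p_def[symmetric] by simp
  moreover have "x + h \<notin> dyadic_interval (Suc n) x"
    unfolding mem_dyadic_interval_iff q hx by simp
  ultimately have y: "x + h \<in> dyadic_interval n x - dyadic_interval (Suc n) x" by blast
  have B: "2 ^ Suc n * (x + h) - 2 * of_int p - 1 = 1/3" using hx by simp
  have "2 ^ Suc n * (takagi (x + h) - takagi x)
      = of_int U * A + (of_int U - 2) * (1/3) + takagi (1/3) - takagi (2 ^ Suc n * x)"
    using takagi_diff_across_midpoint[OF left y, folded p_def, unfolded slope B] unfolding A_def
    by (simp add: algebra_simps)
  then have "takagi (x + h) - takagi x = of_int (U - 1) * h"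
    unfolding T takagi_one_third h_def A_def p_def by (simp add: field_simps)
  moreover have "h \<le> (4/3) / 2 ^ Suc n" unfolding h_def using A by (intro divide_right_mono) simp_all
  then have "h < 1 / 2 ^ n" by (simp add: field_simps)
  moreover have "0 < h" unfolding h_def using A by simp
  ultimately show ?thesis by (intro that)
qed

lemma takagi_right_increment_eq_frequently:
  assumes band: "\<forall>n\<ge>N. U - 2 \<le> partial_slope n x \<and> partial_slope n x \<le> U"
    and returns: "\<forall>n\<ge>N. partial_slope n x = U - 1 \<longrightarrow> (\<forall>i. partial_slope (n + 2 * i) x = U - 1)"
    and top: "\<exists>\<^sub>F n in sequentially. partial_slope n x = U"
  shows "\<exists>\<^sub>F h in at_right 0. takagi (x + h) - takagi x = of_int (U - 1) * h"
proof -
  have "\<exists>h. 0 < h \<and> h < \<delta> \<and> takagi (x + h) - takagi x = of_int (U - 1) * h" if "0 < \<delta>" for \<delta>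
  proof -
    obtain J where J: "(1/2) ^ J < \<delta>" using real_arch_pow_inv[OF \<open>0 < \<delta>\<close>, of "1/2"] by auto
    obtain n' where "Suc (N + J) \<le> n'" "partial_slope n' x = U"
      using top unfolding frequently_sequentially by blast
    then obtain n where n: "N + J \<le> n" "partial_slope (Suc n) x = U"
      by (metis Suc_le_D Suc_le_mono)
    then obtain h where h: "0 < h" "h < 1 / 2 ^ n" "takagi (x + h) - takagi x = of_int (U - 1) * h"
      using takagi_increment_attains_slope[OF band returns] by (metis le_add1 le_trans)
    have "(1::real) / 2 ^ n \<le> (1/2) ^ J"
      using n(1) power_increasing[of J n "2::real"] by (simp add: power_one_over frac_le)
    with h J show ?thesis by (intro exI[of _ h]) auto
  qed
  then show ?thesis by (force simp: frequently_def eventually_at_right_field)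
qed

lemma dini_upper_right_takagi:
  assumes band: "\<forall>n\<ge>N. L \<le> partial_slope n x \<and> partial_slope n x \<le> U" and gap: "U - L \<in> {1, 2}"
    and top: "\<exists>\<^sub>F n in sequentially. partial_slope n x = U"
  shows "dini_upper_right takagi x = of_int (U - 1)"
proof -
  have band': "\<forall>n\<ge>N. U - 2 \<le> partial_slope n x \<and> partial_slope n x \<le> U"
    using band gap by fastforce
  have returns: "\<forall>n\<ge>N. partial_slope n x = U - 1 \<longrightarrow> (\<forall>i. partial_slope (n + 2 * i) x = U - 1)"
    using walk_returns_in_narrow_band[OF partial_slope_step band gap] by blast
  have "\<forall>\<^sub>F h in at_right 0. ereal ((takagi (x + h) - takagi x) / h) \<le> ereal (of_int (U - 1))"
    using takagi_right_increment_le[OF band' returns] eventually_at_right_less[of 0]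
    by eventually_elim (simp add: pos_divide_le_eq)
  moreover have "\<exists>\<^sub>F h in at_right 0. ereal ((takagi (x + h) - takagi x) / h) = ereal (of_int (U - 1))"
    using frequently_eventually_frequently[OF takagi_right_increment_eq_frequently[OF band' returns top]
        eventually_at_right_less[of 0]]
    by (rule frequently_elim1) simp
  ultimately show ?thesis unfolding dini_upper_right_def by (rule Limsup_eqI_frequently)
qed

lemma dini_lower_left_takagi:
  assumes nd: "\<forall>j. 2 ^ j * x \<notin> \<int>"
    and band: "\<forall>n\<ge>N. L \<le> partial_slope n x \<and> partial_slope n x \<le> U" and gap: "U - L \<in> {1, 2}"
    and bottom: "\<exists>\<^sub>F n in sequentially. partial_slope n x = L"
  shows "dini_lower_left takagi x = of_int (L + 1)"
proof -
  have "\<forall>n\<ge>N. - U \<le> partial_slope n (- x) \<and> partial_slope n (- x) \<le> - L"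
    using band by (simp add: partial_slope_minus[OF nd])
  moreover have "\<exists>\<^sub>F n in sequentially. partial_slope n (- x) = - L"
    using bottom by (simp add: partial_slope_minus[OF nd])
  ultimately have "dini_upper_right takagi (- x) = of_int (- L - 1)"
    using gap by (intro dini_upper_right_takagi) auto
  then show ?thesis using takagi_minus
    by (simp add: dini_lower_left_eq_uminus_dini_upper_right algebra_simps)
qed

section \<open>Binary digits\<close>

lemma pow2_mult_binary_partial_sum:
  fixes a :: "nat \<Rightarrow> int"
  defines "S m \<equiv> (\<Sum>i<Suc m. of_int (a (i + 1)) / 2 ^ (i + 1) :: real)"
  shows "\<exists>c. 2 ^ Suc m * S m = of_int (2 * c + a (Suc m))"
proof (induction m)
  case (Suc m)
  then obtain c where "2 ^ Suc m * S m = of_int (2 * c + a (Suc m))" by blast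
  moreover have "2 ^ Suc (Suc m) * S (Suc m) = 2 * (2 ^ Suc m * S m) + of_int (a (Suc (Suc m)))"
    unfolding S_def by (simp add: algebra_simps)
  ultimately show ?case by (intro exI[of _ "2 * c + a (Suc m)"]) simp
qed (simp add: S_def)

lemma tent_slope_eq_one_iff_digit_zero:
  fixes x :: real and k :: int and a :: "nat \<Rightarrow> int"
  assumes adig: "\<forall>n\<ge>1. a n \<in> {0, 1}"
    and expn: "(\<lambda>n. of_int (a (n + 1)) / 2 ^ (n + 1)) sums (x - of_int k)"
    and nd: "2 ^ Suc j * x \<notin> \<int>"
  shows "tent_slope j x = 1 \<longleftrightarrow> a (Suc j) = 0"
proof -
  define f where "f n = of_int (a (n + 1)) / (2::real) ^ (n + 1)" for n
  obtain c where c: "2 ^ Suc j * (\<Sum>i<Suc j. f i) = of_int (2 * c + a (Suc j))"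
    using pow2_mult_binary_partial_sum unfolding f_def by blast
  define \<tau> where "\<tau> = 2 ^ Suc j * (x - of_int k - (\<Sum>i<Suc j. f i))"
  have tail: "(\<lambda>i. 2 ^ Suc j * f (i + Suc j)) sums \<tau>"
    unfolding \<tau>_def using sums_mult[OF sums_split_initial_segment[OF expn[folded f_def]]] .
  have tf: "2 ^ Suc j * f (i + Suc j) = of_int (a (i + Suc j + 1)) * (1/2) ^ Suc i" for i
    unfolding f_def by (simp add: power_add field_simps)
  have "0 \<le> 2 ^ Suc j * f (i + Suc j)" "2 ^ Suc j * f (i + Suc j) \<le> (1/2) ^ Suc i" for i
    using adig[rule_format, of "i + Suc j + 1"] unfolding tf by auto
  then have "0 \<le> \<tau>" "\<tau> \<le> 1"
    using sums_le[OF _ sums_zero tail] sums_le[OF _ tail power_half_series] by blast+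
  have x: "2 ^ Suc j * x = of_int (2 ^ Suc j * k + 2 * c + a (Suc j)) + \<tau>"
    unfolding \<tau>_def using c by (simp add: algebra_simps)
  then have "\<tau> \<noteq> 1" using nd by (metis Ints_of_int of_int_add of_int_1)
  then have "\<lfloor>2 ^ Suc j * x\<rfloor> = 2 ^ Suc j * k + 2 * c + a (Suc j)"
    using x \<open>0 \<le> \<tau>\<close> \<open>\<tau> \<le> 1\<close> by (intro floor_unique) auto
  then show ?thesis using adig[rule_format, of "Suc j"] unfolding tent_slope_def by auto
qed

lemma binary_digits_alternate_if_returns:
  fixes x :: real and k :: int and a :: "nat \<Rightarrow> int"
  assumes adig: "\<forall>n\<ge>1. a n \<in> {0, 1}"
    and expn: "(\<lambda>n. of_int (a (n + 1)) / 2 ^ (n + 1)) sums (x - of_int k)"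
    and nd: "\<forall>j. 2 ^ j * x \<notin> \<int>"
    and returns: "\<forall>i. partial_slope (m + 2 * i) x = partial_slope m x"
  shows "a (Suc m + 2 * i) + a (Suc m + 2 * i + 1) = 1"
proof -
  define j where "j = m + 2 * i"
  have iff: "tent_slope l x = 1 \<longleftrightarrow> a (Suc l) = 0" for l
    using tent_slope_eq_one_iff_digit_zero[OF adig expn] nd by blast
  have "tent_slope j x + tent_slope (Suc j) x = 0"
    using tent_slope_pairs_cancel[OF returns] unfolding j_def by simp
  then have "a (Suc j) = 0 \<longleftrightarrow> a (Suc (Suc j)) \<noteq> 0"
    using iff[of j] iff[of "Suc j"] tent_slope_cases[of j x] tent_slope_cases[of "Suc j" x] by auto
  then show ?thesis
    using adig[rule_format, of "Suc j"] adig[rule_format, of "Suc (Suc j)"] unfolding j_def by auto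
qed

lemma binary_digits_eventually_alternate:
  fixes x :: real and k :: int and a :: "nat \<Rightarrow> int"
  assumes adig: "\<forall>n\<ge>1. a n \<in> {0, 1}"
    and expn: "(\<lambda>n. of_int (a (n + 1)) / 2 ^ (n + 1)) sums (x - of_int k)"
    and nd: "\<forall>j. 2 ^ j * x \<notin> \<int>"
    and band: "\<forall>n\<ge>N. L \<le> partial_slope n x \<and> partial_slope n x \<le> U" and gap: "U - L \<in> {1, 2}"
    and top: "\<exists>\<^sub>F n in sequentially. partial_slope n x = U"
  shows "\<exists>m\<ge>1. \<forall>i. a (m + 2 * i) + a (m + 2 * i + 1) = 1"
proof -
  obtain n where "N \<le> n" "partial_slope n x = U"
    using top unfolding frequently_sequentially by blast
  then have "N \<le> Suc n" "partial_slope (Suc n) x = U - 1"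
    using band[rule_format, of "Suc n"] partial_slope_step[of n x] by auto
  then have "\<forall>i. partial_slope (Suc n + 2 * i) x = partial_slope (Suc n) x"
    using walk_returns_in_narrow_band[OF partial_slope_step band gap, of "Suc n"] by auto
  then have "a (Suc (Suc n) + 2 * i) + a (Suc (Suc n) + 2 * i + 1) = 1" for i
    by (rule binary_digits_alternate_if_returns[OF adig expn nd])
  then show ?thesis by (intro exI[of _ "Suc (Suc n)"]) simp
qed

theorem proposition2p5:
  fixes x :: real and k :: int and a :: "nat \<Rightarrow> int"
  assumes xD: "x \<notin> Dall"
    and adig: "\<forall>n\<ge>1. a n \<in> {0, 1}"
    and expn: "(\<lambda>n. of_int (a (n + 1)) / 2 ^ (n + 1)) sums (x - of_int k)"
    and fin_inf: "\<bar>liminf (\<lambda>n. ereal (deriv (Gfun n) x))\<bar> \<noteq> \<infinity>"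
    and fin_sup: "\<bar>limsup (\<lambda>n. ereal (deriv (Gfun n) x))\<bar> \<noteq> \<infinity>"
    and gap: "limsup (\<lambda>n. ereal (deriv (Gfun n) x)) - liminf (\<lambda>n. ereal (deriv (Gfun n) x)) \<in> {1, 2}"
  shows "(\<exists>m\<ge>1. \<forall>i. a (m + 2 * i) + a (m + 2 * i + 1) = 1)
    \<and> dini_lower_left takagi x = liminf (\<lambda>n. ereal (deriv (Gfun n) x)) + 1
    \<and> dini_upper_right takagi x = limsup (\<lambda>n. ereal (deriv (Gfun n) x)) - 1"
proof -
  have nd: "\<forall>j. 2 ^ j * x \<notin> \<int>" using xD pow2_mult_notin_Ints_if_notin_Dall by blast
  have slopes: "(\<lambda>n. ereal (deriv (Gfun n) x)) = (\<lambda>n. ereal (of_int (partial_slope n x)))"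
    using deriv_Gfun_eq_partial_slope[OF nd] by simp
  obtain L U N where
    L: "liminf (\<lambda>n. ereal (of_int (partial_slope n x))) = ereal (of_int L)" and
    U: "limsup (\<lambda>n. ereal (of_int (partial_slope n x))) = ereal (of_int U)" and
    gap': "U - L \<in> {1, 2}" and band: "\<forall>n\<ge>N. L \<le> partial_slope n x \<and> partial_slope n x \<le> U" and
    bottom: "\<exists>\<^sub>F n in sequentially. partial_slope n x = L" and
    top: "\<exists>\<^sub>F n in sequentially. partial_slope n x = U"
    using fin_inf fin_sup gap unfolding slopes by (rule int_seq_narrow_band)
  have "\<exists>m\<ge>1. \<forall>i. a (m + 2 * i) + a (m + 2 * i + 1) = 1"
    using adig expn nd band gap' top by (rule binary_digits_eventually_alternate)
  moreover have "dini_lower_left takagi x = of_int (L + 1)"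
    using nd band gap' bottom by (rule dini_lower_left_takagi)
  moreover have "dini_upper_right takagi x = of_int (U - 1)"
    using band gap' top by (rule dini_upper_right_takagi)
  ultimately show ?thesis unfolding slopes L U by (simp add: one_ereal_def)
qed

end
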